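(* There exists an absolute constant $\delta>0$ such that for every $t\in[0,1]$ and every integer $m\ge0$ the following hold. (i) For every $z\in\mathbb C$ with $|\operatorname{Im}z|\le\delta$ there is $k_0\in\{0,\dots,m\}$ with $|\Phi_{k_0}(z)|\ge3^{-m}$. (ii) For every $x_0\in\mathbb R$, with $R=[x_0-\delta,x_0+\delta]\times[-\delta,\delta]\subset\mathbb C$, there is at most one index $k_0\in\{0,\dots,m\}$ which is critical for $R$, where $k_0$ is called critical for $R$ if there is $z_0\in R$ with $|\tilde\varphi_{k_0}(z_0)|<3^{-m}$.
   Context: For fixed $t\in[0,1]$: $\tilde\varphi(z)=1+e^{-iz}+e^{-itz}$, $\tilde\varphi_k(z)=\tilde\varphi(3^{-k}z)$ for integers $k\ge0$, $\Phi(z)=\prod_{k=0}^m\tilde\varphi_k(z)$, and $\Phi_{k_0}(z)=\prod_{k\in\{0,\dots,m\}\setminus\{k_0\}}\tilde\varphi_k(z)$. *)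

theory Defs
  imports "HOL-Analysis.Analysis"
begin

definition phit :: "real \<Rightarrow> complex \<Rightarrow> complex" where
  "phit t z = 1 + exp (- \<i> * z) + exp (- \<i> * complex_of_real t * z)"

definition phik :: "real \<Rightarrow> nat \<Rightarrow> complex \<Rightarrow> complex" where
  "phik t k z = phit t (z / 3 ^ k)"

definition Phi :: "real \<Rightarrow> nat \<Rightarrow> complex \<Rightarrow> complex" where
  "Phi t m z = (\<Prod>k\<in>{0..m}. phik t k z)"

definition Phi_excl :: "real \<Rightarrow> nat \<Rightarrow> nat \<Rightarrow> complex \<Rightarrow> complex" where
  "Phi_excl t m k0 z = (\<Prod>k\<in>{0..m} - {k0}. phik t k z)"

definition rect :: "real \<Rightarrow> real \<Rightarrow> complex set" where
  "rect x0 d = {z. x0 - d \<le> Re z \<and> Re z \<le> x0 + d \<and> -d \<le> Im z \<and> Im z \<le> d}"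

definition critical :: "real \<Rightarrow> nat \<Rightarrow> complex set \<Rightarrow> nat \<Rightarrow> bool" where
  "critical t m R k0 \<longleftrightarrow> (\<exists>z0\<in>R. norm (phik t k0 z0) < 3 powr (- real m))"

end

theory Submission
  imports Defs
begin

(* Write phi~(w) = 1 + r e^{i a} + rho e^{i b}: for w close to the real axis the moduli r, rho
   are close to 1, and 1 + e^{ia} + e^{ib} is small only when e^{ia}, e^{ib} are close to the
   primitive cube roots of unity, i.e. cos a ~ -1/2.  Tripling such an angle lands near 0, and
   the error 1 - cos(3a) is quadratic in the defect.  Since phi~_{s'}(z) is phi~ evaluated at
   3^{s-s'} times the argument of phi~_s(z), a value |phi~_s(z)| < 3^{-L} therefore forces
   |phi~_{s'}(z')| >= 1 for all s - L <= s' < s and all z' within 2/1000 of z (Re part): the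
   tripled angles have cosine >= 1/20, so the real part of phi~_{s'}(z') is at least 1.

   Part (i) of the theorem is the
   combinatorial lemma applied to |phi~_k(z)|; part (ii) is the key lemma with L = m, since two
   critical indices k1 < k2 would force |phi~_{k1}| >= 1 > 3^{-m}. *)


lemma cos_ge_cos_minus_dist: "cos (x::real) \<ge> cos y - \<bar>x - y\<bar>"
proof -
  have "\<bar>cos y - cos x\<bar> = \<bar>2 * sin ((y + x) / 2) * sin ((x - y) / 2)\<bar>"
    by (simp add: cos_diff_cos)
  also have "\<dots> \<le> 2 * \<bar>sin ((x - y) / 2)\<bar>"
    unfolding abs_mult by (intro mult_right_mono) auto
  also have "\<dots> \<le> 2 * \<bar>(x - y) / 2\<bar>"
    using abs_sin_x_le_abs_x[of "(x - y) / 2"] by linarith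
  finally show ?thesis by simp
qed

lemma abs_exp_minus_one_le:
  assumes "\<bar>y::real\<bar> \<le> 1/2"
  shows "\<bar>exp y - 1\<bar> \<le> 2 * \<bar>y\<bar>"
proof (cases "y \<ge> 0")
  case True
  thus ?thesis using real_exp_bound_lemma[of y] assms by auto
next
  case False
  have "1 + y \<le> exp y" by (rule exp_ge_add_one_self)
  moreover have "exp y \<le> 1" using False by simp
  ultimately show ?thesis using False by arith
qed

lemma abs_exp_scaled_minus_one_le:
  assumes "\<bar>y::real\<bar> \<le> 1/2" "\<bar>t\<bar> \<le> 1"
  shows "\<bar>exp (t * y) - 1\<bar> \<le> 2 * \<bar>y\<bar>"
proof -
  have "\<bar>t * y\<bar> \<le> \<bar>y\<bar>"
    using assms(2) unfolding abs_mult by (simp add: mult_left_le_one_le)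
  thus ?thesis using abs_exp_minus_one_le[of "t * y"] assms(1) by linarith
qed

text \<open>The triple-angle formula, written around the value \<open>cos a = -1/2\<close>.\<close>
lemma one_minus_cos_triple:
  "1 - cos (3 * (a::real)) = 6 * (cos a + 1/2)^2 - 4 * (cos a + 1/2)^3"
  unfolding cos_treble_cos by (simp add: power2_eq_square power3_eq_cube algebra_simps)

lemma one_minus_cos_triple_le: "1 - cos (3 * (x::real)) \<le> 9 * (1 - cos x)"
proof -
  have "0 \<le> cos x + 2" using cos_ge_minus_one[of x] by linarith
  hence "0 \<le> (cos x - 1)^2 * (cos x + 2)" by simp
  thus ?thesis
    unfolding cos_treble_cos by (simp add: power2_eq_square power3_eq_cube algebra_simps)
qed

lemma one_minus_cos_pow3_le: "1 - cos (3^j * (x::real)) \<le> 9^j * (1 - cos x)"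
proof (induction j)
  case 0
  show ?case by simp
next
  case (Suc j)
  have "1 - cos (3^Suc j * x) = 1 - cos (3 * (3^j * x))" by (simp add: mult.assoc)
  also have "\<dots> \<le> 9 * (1 - cos (3^j * x))" by (rule one_minus_cos_triple_le)
  also have "\<dots> \<le> 9 * (9^j * (1 - cos x))" using Suc.IH by simp
  finally show ?case by simp
qed

text \<open>The cubic in \<open>one_minus_cos_triple\<close> is quadratically small when its argument
  lies in the window provided by \<open>cos_near_zero_window\<close> below.\<close>
lemma triple_defect_poly_le:
  fixes e \<eta> :: real
  assumes "-\<eta> \<le> e" "e \<le> \<eta> + \<eta>^2/2" "0 \<le> \<eta>" "\<eta> \<le> 7/20"
  shows "6 * e^2 - 4 * e^3 \<le> 83/10 * \<eta>^2"
proof (cases "e \<ge> 0")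
  case True
  have "\<eta> * \<eta> \<le> 7/20 * \<eta>" using assms by (intro mult_right_mono) auto
  hence "e \<le> 47/40 * \<eta>" using assms unfolding power2_eq_square by linarith
  hence "e^2 \<le> (47/40 * \<eta>)^2" using True by (intro power_mono) auto
  moreover have "e^3 \<ge> 0" using True by simp
  moreover have "(47/40 * \<eta>)^2 = 2209/1600 * \<eta>^2" by (simp add: power2_eq_square)
  ultimately show ?thesis using zero_le_power2[of \<eta>] by linarith
next
  case False
  define f where "f = -e"
  have f: "0 \<le> f" "f \<le> \<eta>" using False assms unfolding f_def by auto
  have "f^2 \<le> \<eta>^2" "f^3 \<le> \<eta>^3" using f by (simp_all add: power_mono)
  moreover have "\<eta> * \<eta>^2 \<le> 7/20 * \<eta>^2" using assms by (intro mult_right_mono) auto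
  hence "\<eta>^3 \<le> 7/20 * \<eta>^2" by (simp add: power3_eq_cube power2_eq_square)
  moreover have "6 * e^2 - 4 * e^3 = 6 * f^2 + 4 * f^3" unfolding f_def by simp
  ultimately show ?thesis using zero_le_power2[of \<eta>] by linarith
qed


section \<open>Near-zeros of \<open>1 + e^{ia} + e^{ib}\<close>\<close>

lemma norm_one_plus_cis_sq: "norm (1 + cis a)^2 = 2 + 2 * cos a"
proof -
  have "norm (1 + cis a)^2 = (1 + cos a)^2 + (sin a)^2" by (simp add: cmod_power2)
  also have "\<dots> = 2 + 2 * cos a"
    using sin_cos_squared_add[of a] by (simp add: power2_eq_square algebra_simps)
  finally show ?thesis .
qed

text \<open>If \<open>1 + e^{ia} + e^{ib}\<close> is smaller than \<open>\<eta> < 1\<close>, then \<open>|1 + e^{ia}|\<close> lies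
  within \<open>\<eta>\<close> of 1, which pins down \<open>cos a\<close> near \<open>-1/2\<close>.\<close>
lemma cos_near_zero_window:
  assumes small: "norm (1 + cis a + cis b) < \<eta>" and "\<eta> < 1"
  shows "-\<eta> \<le> cos a + 1/2" "cos a + 1/2 \<le> \<eta> + \<eta>^2/2"
proof -
  have "norm (1 + cis a) \<le> norm (1 + cis a + cis b) + norm (cis b)"
    using norm_triangle_ineq4[of "1 + cis a + cis b" "cis b"] by simp
  hence upper: "norm (1 + cis a) < 1 + \<eta>" using small by simp
  have "norm (cis b) \<le> norm (1 + cis a + cis b) + norm (1 + cis a)"
    using norm_triangle_ineq4[of "1 + cis a + cis b" "1 + cis a"] by (simp add: algebra_simps)
  hence lower: "1 - \<eta> < norm (1 + cis a)" using small by simp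
  have "norm (1 + cis a)^2 < (1 + \<eta>)^2"
    using upper by (intro power_strict_mono) auto
  hence "2 + 2 * cos a < (1 + \<eta>)^2" by (simp only: norm_one_plus_cis_sq)
  thus "cos a + 1/2 \<le> \<eta> + \<eta>^2/2" by (simp add: power2_eq_square algebra_simps)
  have "(1 - \<eta>)^2 < norm (1 + cis a)^2"
    using lower assms(2) by (intro power_strict_mono) auto
  hence "(1 - \<eta>)^2 < 2 + 2 * cos a" by (simp only: norm_one_plus_cis_sq)
  hence "-\<eta> + \<eta>^2/2 < cos a + 1/2" by (simp add: power2_eq_square algebra_simps)
  thus "-\<eta> \<le> cos a + 1/2" using zero_le_power2[of \<eta>] by linarith
qed

lemma triple_angle_near_zero:
  assumes "norm (1 + cis a + cis b) < \<eta>" "\<eta> \<le> 7/20"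
  shows "1 - cos (3 * a) \<le> 83/10 * \<eta>^2"
proof -
  have "0 \<le> \<eta>" using assms(1) norm_ge_zero by (meson less_imp_le order_trans)
  with assms show ?thesis
    unfolding one_minus_cos_triple
    using cos_near_zero_window[OF assms(1)] by (intro triple_defect_poly_le) auto
qed

lemma norm_unit_coefficients_le:
  "norm (1 + cis a + cis b)
     \<le> norm (1 + of_real r * cis a + of_real \<rho> * cis b) + \<bar>r - 1\<bar> + \<bar>\<rho> - 1\<bar>"
proof -
  define u where "u = 1 + of_real r * cis a + of_real \<rho> * cis b"
  have "1 + cis a + cis b = u - of_real (r - 1) * cis a - of_real (\<rho> - 1) * cis b"
    unfolding u_def by (simp add: algebra_simps)
  also have "norm \<dots> \<le> norm (u - of_real (r - 1) * cis a) + norm (of_real (\<rho> - 1) * cis b)"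
    by (rule norm_triangle_ineq4)
  also have "\<dots> \<le> norm u + norm (of_real (r - 1) * cis a) + norm (of_real (\<rho> - 1) * cis b)"
    using norm_triangle_ineq4[of u] by simp
  finally show ?thesis unfolding u_def by (simp only: norm_mult norm_of_real norm_cis mult_1_right)
qed

lemma cos_pow3_angle_ge:
  assumes small: "norm (1 + of_real r * cis a + of_real \<rho> * cis b) < \<epsilon>"
    and r: "\<bar>r - 1\<bar> \<le> h" and \<rho>: "\<bar>\<rho> - 1\<bar> \<le> h"
    and j: "j \<ge> 1" and budget: "3^j * (\<epsilon> + 2*h) \<le> 1 + 4/1000"
  shows "cos (3^j * a) \<ge> 1/20"
proof -
  define \<eta> where "\<eta> = \<epsilon> + 2*h"
  have near: "norm (1 + cis a + cis b) < \<eta>"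
    using norm_unit_coefficients_le[of a b r \<rho>] small r \<rho> unfolding \<eta>_def by linarith
  have \<eta>0: "0 \<le> \<eta>" using near by (meson norm_ge_zero order_trans less_imp_le)
  have "(3::real)^1 \<le> 3^j" using j by (intro power_increasing) auto
  hence "3 * \<eta> \<le> 3^j * \<eta>" using \<eta>0 by (intro mult_right_mono) auto
  hence "\<eta> \<le> 7/20" using budget unfolding \<eta>_def by simp
  hence triple: "1 - cos (3 * a) \<le> 83/10 * \<eta>^2"
    using triple_angle_near_zero[OF near] by simp
  obtain i where i: "j = Suc i" using j by (cases j) auto
  have "1 - cos (3^j * a) = 1 - cos (3^i * (3 * a))" unfolding i by (simp add: ac_simps)
  also have "\<dots> \<le> 9^i * (1 - cos (3 * a))" by (rule one_minus_cos_pow3_le)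
  also have "\<dots> \<le> 9^i * (83/10 * \<eta>^2)" using triple by (intro mult_left_mono) auto
  also have "\<dots> = 83/90 * (3^j * \<eta>)^2"
  proof -
    have "(3::real)^j * 3^j = 9 * 9^i" unfolding i by (simp flip: power_mult_distrib)
    thus ?thesis by (simp add: power2_eq_square)
  qed
  also have "\<dots> \<le> 83/90 * (1 + 4/1000)^2"
    using budget \<eta>0 unfolding \<eta>_def by (intro mult_left_mono power_mono) auto
  finally show ?thesis by (simp add: power2_eq_square)
qed

lemma norm_ge_one_if_cos_nonneg:
  assumes "r \<ge> 0" "\<rho> \<ge> 0" "cos a \<ge> 0" "cos b \<ge> 0"
  shows "norm (1 + of_real r * cis a + of_real \<rho> * cis b) \<ge> 1"
proof -
  have "1 \<le> 1 + r * cos a + \<rho> * cos b" using assms by simp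
  also have "\<dots> = Re (1 + of_real r * cis a + of_real \<rho> * cis b)" by simp
  also have "\<dots> \<le> norm (1 + of_real r * cis a + of_real \<rho> * cis b)" by (rule complex_Re_le_cmod)
  finally show ?thesis .
qed


section \<open>The factors \<open>phi~_k\<close>\<close>

lemma exp_minus_i_times: "exp (- \<i> * w) = of_real (exp (Im w)) * cis (- Re w)"
proof -
  have "- \<i> * w = of_real (Im w) + \<i> * of_real (- Re w)" by (simp add: complex_eq_iff)
  thus ?thesis by (simp only: exp_add cis_conv_exp exp_of_real)
qed

lemma phik_polar:
  "phik t k z = 1 + of_real (exp (Im z / 3^k)) * cis (- (Re z / 3^k))
      + of_real (exp (t * (Im z / 3^k))) * cis (- (t * (Re z / 3^k)))"
proof -
  define w where "w = z / 3^k"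
  have "w = z / of_real (3^k)" unfolding w_def by simp
  hence w: "Re w = Re z / 3^k" "Im w = Im z / 3^k"
    by (simp_all only: Re_divide_of_real Im_divide_of_real)
  have tw: "- \<i> * complex_of_real t * w = - \<i> * (of_real t * w)" by (simp only: mult.assoc)
  have t_w: "Re (of_real t * w) = t * Re w" "Im (of_real t * w) = t * Im w" by simp_all
  show ?thesis unfolding phik_def phit_def w_def[symmetric] tw exp_minus_i_times t_w w ..
qed

lemma small_factor_aligns_lower_angles:
  assumes t: "0 \<le> t" "t \<le> 1" and im: "\<bar>Im z\<bar> \<le> 1/1000"
    and levels: "s' < s" "s - s' \<le> L"
    and small: "norm (phik t s z) < (1/3)^L"
  shows "cos (Re z / 3^s') \<ge> 1/20" "cos (t * (Re z / 3^s')) \<ge> 1/20"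
proof -
  define j where "j = s - s'"
  have j: "1 \<le> j" "j \<le> L" and pow: "(3::real)^s = 3^j * 3^s'"
    using levels unfolding j_def by (auto simp: power_add[symmetric])
  define y where "y = Im z / 3^s"
  define h where "h = 2/1000 / (3::real)^s"
  have "\<bar>y\<bar> = \<bar>Im z\<bar> / 3^s" unfolding y_def by (simp add: abs_divide)
  also have "\<dots> \<le> 1/1000 / 3^s" by (rule divide_right_mono[OF im]) simp
  finally have "\<bar>y\<bar> \<le> 1/1000 / 3^s" .
  moreover have "1/1000 / (3::real)^s \<le> 1/1000" by (simp add: divide_le_eq)
  ultimately have y: "\<bar>y\<bar> \<le> 1/2" "2 * \<bar>y\<bar> \<le> h" unfolding h_def by linarith+
  have mod1: "\<bar>exp y - 1\<bar> \<le> h" and modt: "\<bar>exp (t * y) - 1\<bar> \<le> h"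
    using abs_exp_minus_one_le[OF y(1)] abs_exp_scaled_minus_one_le[OF y(1), of t] t y(2)
    by auto
  define a where "a = - (Re z / 3^s)"
  define b where "b = - (t * (Re z / 3^s))"
  have sm: "norm (1 + of_real (exp y) * cis a + of_real (exp (t * y)) * cis b) < (1/3)^L"
    using small unfolding phik_polar y_def a_def b_def .
  have "(1/3::real)^L \<le> (1/3)^j" using j by (intro power_decreasing) auto
  hence "3^j * (1/3::real)^L \<le> 1" by (simp add: power_one_over divide_le_eq)
  moreover have "3^j * h \<le> 2/1000" unfolding h_def pow by (simp add: divide_le_eq)
  ultimately have budget: "3^j * ((1/3)^L + 2*h) \<le> 1 + 4/1000" by (simp add: algebra_simps)
  have "cos (3^j * a) \<ge> 1/20"
    by (rule cos_pow3_angle_ge[OF sm mod1 modt j(1) budget])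
  moreover have "cos (3^j * b) \<ge> 1/20"
    by (rule cos_pow3_angle_ge[OF _ modt mod1 j(1) budget]) (use sm in \<open>simp add: ac_simps\<close>)
  moreover have "3^j * a = - (Re z / 3^s')" "3^j * b = - (t * (Re z / 3^s'))"
    unfolding a_def b_def pow by simp_all
  ultimately show "cos (Re z / 3^s') \<ge> 1/20" "cos (t * (Re z / 3^s')) \<ge> 1/20" by simp_all
qed

lemma small_factor_forces_large_lower_factors:
  assumes t: "0 \<le> t" "t \<le> 1"
    and im: "\<bar>Im z\<bar> \<le> 1/1000" and re: "\<bar>Re z' - Re z\<bar> \<le> 2/1000"
    and levels: "s' < s" "s - s' \<le> L"
    and small: "norm (phik t s z) < (1/3)^L"
  shows "norm (phik t s' z') \<ge> 1"
proof -
  have aligned: "cos (Re z / 3^s') \<ge> 1/20" "cos (t * (Re z / 3^s')) \<ge> 1/20"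
    using small_factor_aligns_lower_angles[OF t im levels small] by auto
  have shift: "\<bar>Re z' / 3^s' - Re z / 3^s'\<bar> \<le> 2/1000"
  proof -
    have "\<bar>Re z' / 3^s' - Re z / 3^s'\<bar> = \<bar>Re z' - Re z\<bar> / 3^s'"
      by (simp add: diff_divide_distrib[symmetric] abs_divide)
    also have "\<dots> \<le> \<bar>Re z' - Re z\<bar>" using divide_left_mono[of 1 "3^s'" "\<bar>Re z' - Re z\<bar>"] by simp
    finally show ?thesis using re by linarith
  qed
  have "\<bar>t * (Re z' / 3^s') - t * (Re z / 3^s')\<bar> \<le> \<bar>Re z' / 3^s' - Re z / 3^s'\<bar>"
    using t unfolding right_diff_distrib[symmetric] abs_mult by (simp add: mult_left_le_one_le)
  hence "cos (t * (Re z' / 3^s')) \<ge> 0"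
    using aligned shift cos_ge_cos_minus_dist[where x="t * (Re z' / 3^s')" and y="t * (Re z / 3^s')"]
    by linarith
  moreover have "cos (Re z' / 3^s') \<ge> 0"
    using aligned shift cos_ge_cos_minus_dist[where x="Re z' / 3^s'" and y="Re z / 3^s'"]
    by linarith
  ultimately show ?thesis unfolding phik_polar by (intro norm_ge_one_if_cos_nonneg) auto
qed


section \<open>A combinatorial lemma on products\<close>

lemma layer_exists:
  "(q::real)^n \<le> x \<Longrightarrow> x < 1 \<Longrightarrow> \<exists>L<n. q^Suc L \<le> x \<and> x < q^L"
proof (induction n)
  case 0
  thus ?case by simp
next
  case (Suc n)
  show ?case
  proof (cases "q^n \<le> x")
    case True
    with Suc obtain L where "L < n" "q^Suc L \<le> x \<and> x < q^L" by blast
    thus ?thesis by (intro exI[of _ L]) auto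
  next
    case False
    thus ?thesis using Suc.prems by (intro exI[of _ n]) auto
  qed
qed

text \<open>Induction on \<open>m\<close>:
  either \<open>v m \<ge> 1\<close>, or \<open>v m < q^m\<close> and we drop \<open>v m\<close>, or \<open>v m \<in> [q^{L+1}, q^L)\<close>; in the
  last case the factors \<open>v (m-L) \<dots> v (m-1)\<close> are forced to be \<open>\<ge> 1\<close>, and \<open>v m \<ge> q^{L+1}\<close>
  times the induction hypothesis at level \<open>m - L - 1\<close> gives \<open>q^m\<close>.\<close>
lemma drop_one_factor_product_ge:
  fixes v :: "nat \<Rightarrow> real" and q :: real
  assumes q: "0 \<le> q" "q \<le> 1" and nonneg: "\<And>k. v k \<ge> 0"
    and forcing: "\<And>s s' L. v s < q^L \<Longrightarrow> s' < s \<Longrightarrow> s - s' \<le> L \<Longrightarrow> v s' \<ge> 1"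
  shows "\<exists>k0\<le>m. (\<Prod>k\<in>{0..m}-{k0}. v k) \<ge> q^m"
proof (induction m rule: less_induct)
  case (less m)
  have prod_split: "(\<Prod>k\<in>{0..m}-{k0}. v k)
      = v m * ((\<Prod>k\<in>{0..n}-{k0}. v k) * (\<Prod>k\<in>{Suc n..<m}. v k))"
    if "n < m" "k0 \<le> n" for n k0
  proof -
    have "{0..m}-{k0} = insert m (({0..n}-{k0}) \<union> {Suc n..<m})"
      "m \<notin> ({0..n}-{k0}) \<union> {Suc n..<m}" using that by auto
    moreover have "prod v (({0..n}-{k0}) \<union> {Suc n..<m}) = prod v ({0..n}-{k0}) * prod v {Suc n..<m}"
      by (rule prod.union_disjoint) auto
    ultimately show ?thesis by simp
  qed
  consider (large) "v m \<ge> 1" | (tiny) "v m < q^m" | (layer) "q^m \<le> v m" "v m < 1"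
    by linarith
  thus ?case
  proof cases
    case large
    show ?thesis
    proof (cases m)
      case 0
      thus ?thesis by (intro exI[of _ 0]) auto
    next
      case (Suc n)
      then obtain k0 where k0: "k0 \<le> n" "(\<Prod>k\<in>{0..n}-{k0}. v k) \<ge> q^n"
        using less by blast
      have "q^m \<le> q^n" using Suc q by (intro power_decreasing) auto
      also have "\<dots> = 1 * (q^n * 1)" by simp
      also have "\<dots> \<le> v m * ((\<Prod>k\<in>{0..n}-{k0}. v k) * 1)"
        using large k0 q by (intro mult_mono) (auto simp: prod_nonneg nonneg)
      finally show ?thesis using k0 Suc prod_split[of n k0] by (intro exI[of _ k0]) auto
    qed
  next
    case tiny
    have "(\<Prod>k\<in>{0..m}-{m}. v k) \<ge> 1" by (rule prod_ge_1) (use tiny forcing in auto)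
    moreover have "q^m \<le> 1" using q by (simp add: power_le_one)
    ultimately show ?thesis by (intro exI[of _ m]) auto
  next
    case layer
    then obtain L where L: "L < m" "q^Suc L \<le> v m" "v m < q^L"
      using layer_exists by blast
    define n where "n = m - Suc L"
    have "n < m" using L by (simp add: n_def)
    then obtain k0 where k0: "k0 \<le> n" "(\<Prod>k\<in>{0..n}-{k0}. v k) \<ge> q^n"
      using less by blast
    have forced: "(\<Prod>k\<in>{Suc n..<m}. v k) \<ge> 1"
      by (rule prod_ge_1) (use L forcing in \<open>auto simp: n_def\<close>)
    have "Suc L + n = m" using L by (simp add: n_def)
    hence "q^m = q^Suc L * (q^n * 1)" by (metis mult_1_right power_add)
    also have "\<dots> \<le> v m * ((\<Prod>k\<in>{0..n}-{k0}. v k) * (\<Prod>k\<in>{Suc n..<m}. v k))"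
      using L k0 forced q by (intro mult_mono) (auto simp: nonneg prod_nonneg)
    finally show ?thesis using k0 \<open>n < m\<close> prod_split[of n k0] by (intro exI[of _ k0]) auto
  qed
qed


lemma three_powr_minus: "(3::real) powr (- real m) = (1/3)^m"
  by (simp add: powr_minus powr_realpow power_one_over inverse_eq_divide)

lemma rect_bounds:
  assumes "z \<in> rect x0 \<delta>" "z' \<in> rect x0 \<delta>"
  shows "\<bar>Im z\<bar> \<le> \<delta>" "\<bar>Re z' - Re z\<bar> \<le> 2 * \<delta>"
  using assms unfolding rect_def by auto

theorem proposition21:
  shows "\<exists>\<delta>::real. \<delta> > 0 \<and>
    (\<forall>t\<in>{0..1::real}. \<forall>m::nat.
      (\<forall>z::complex. \<bar>Im z\<bar> \<le> \<delta> \<longrightarrow>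
         (\<exists>k0\<in>{0..m}. norm (Phi_excl t m k0 z) \<ge> 3 powr (- real m))) \<and>
      (\<forall>x0::real. \<forall>k1\<in>{0..m}. \<forall>k2\<in>{0..m}.
         critical t m (rect x0 \<delta>) k1 \<and> critical t m (rect x0 \<delta>) k2 \<longrightarrow> k1 = k2))"
proof (intro exI[of _ "1/1000"] conjI ballI allI impI)
  fix t :: real and m :: nat and z :: complex
  assume t: "t \<in> {0..1}" and z: "\<bar>Im z\<bar> \<le> 1/1000"
  have "\<exists>k0\<le>m. (\<Prod>k\<in>{0..m}-{k0}. norm (phik t k z)) \<ge> (1/3)^m"
    using t z small_factor_forces_large_lower_factors[of t z z]
    by (intro drop_one_factor_product_ge) auto
  thus "\<exists>k0\<in>{0..m}. norm (Phi_excl t m k0 z) \<ge> 3 powr (- real m)"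
    unfolding Phi_excl_def three_powr_minus prod_norm by auto
next
  fix t :: real and m :: nat and x0 :: real and k1 k2
  assume t: "t \<in> {0..1}" and k: "k1 \<in> {0..m}" "k2 \<in> {0..m}"
    and "critical t m (rect x0 (1/1000)) k1 \<and> critical t m (rect x0 (1/1000)) k2"
  then obtain z1 z2 where z: "z1 \<in> rect x0 (1/1000)" "z2 \<in> rect x0 (1/1000)"
    and small: "norm (phik t k1 z1) < (1/3)^m" "norm (phik t k2 z2) < (1/3)^m"
    unfolding critical_def three_powr_minus by blast
  have not_both_small: False
    if "k < k'" "k' \<le> m" "z \<in> rect x0 (1/1000)" "z' \<in> rect x0 (1/1000)"
      "norm (phik t k z) < (1/3)^m" "norm (phik t k' z') < (1/3)^m" for k k' z z'
  proof -
    have "norm (phik t k z) \<ge> 1"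
      using t that rect_bounds[OF that(4,3)]
      by (intro small_factor_forces_large_lower_factors[where s = k' and L = m]) auto
    moreover have "(1/3::real)^m \<le> 1" by (simp add: power_le_one)
    ultimately show False using that(5) by linarith
  qed
  show "k1 = k2"
    using not_both_small[of k1 k2 z1 z2] not_both_small[of k2 k1 z2 z1] k z small
    by (cases k1 k2 rule: linorder_cases) auto
qed simp

end
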